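(* For every finite alphabet $\Sigma$ with $|\Sigma|\ge1$, the minimum deterministic finite automaton over $\Sigma$ recognizing $L_{\mathrm{UNIQ}}$ has at least $2^{|\Sigma|-1}$ states.
   Context: Let $\Sigma$ be a finite alphabet and $\$\notin\Sigma$ a delimiter symbol; $\Sigma_\$=\Sigma\cup\{\$\}$. The bigram map $\Phi$ sends a string $z\in\$\Sigma^*\$$ to the vector $\Phi(z)\in\mathbb{N}^{\Sigma_\$^2}$ whose $(i,j)$ entry is the number of positions at which the two-letter string $ij$ occurs as a contiguous factor of $z$ (counting overlaps). $L_{\mathrm{UNIQ}}\subseteq\Sigma^*$ is the set of $w\in\Sigma^*$ such that the only $z\in\$\Sigma^*\$$ with $\Phi(z)=\Phi(\$w\$)$ is $z=\$w\$$ (this language is regular). *)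

theory Defs
  imports Main
begin

text \<open>Alphabet: the finite type 'a (Sigma = UNIV). The extended alphabet
  Sigma_$ is 'a option, with None playing the role of the delimiter $.\<close>

definition delim :: "'a list \<Rightarrow> 'a option list" where
  "delim w = None # map Some w @ [None]"

definition bigram :: "'b list \<Rightarrow> 'b \<Rightarrow> 'b \<Rightarrow> nat" where
  "bigram z i j = card {k. Suc k < length z \<and> z ! k = i \<and> z ! Suc k = j}"

definition L_UNIQ :: "'a list set" where
  "L_UNIQ = {w. \<forall>v. bigram (delim v) = bigram (delim w) \<longrightarrow> v = w}"

definition dfa :: "'s set \<Rightarrow> ('s \<Rightarrow> 'a \<Rightarrow> 's) \<Rightarrow> 's \<Rightarrow> 's set \<Rightarrow> bool" where
  "dfa Q \<delta> q0 F \<longleftrightarrow> finite Q \<and> q0 \<in> Q \<and> F \<subseteq> Q \<and> (\<forall>q\<in>Q. \<forall>a. \<delta> q a \<in> Q)"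

definition dfa_lang :: "('s \<Rightarrow> 'a \<Rightarrow> 's) \<Rightarrow> 's \<Rightarrow> 's set \<Rightarrow> 'a list set" where
  "dfa_lang \<delta> q0 F = {w. fold (\<lambda>a q. \<delta> q a) w q0 \<in> F}"

end

theory Submission
  imports Defs "HOL-Library.Multiset"
begin

text \<open>
  Proof idea (a fooling-set argument).  Fix a letter d and let U be the other letters.
  For every subset S of U pick a repetition-free enumeration x_S of S.  If c lies in S
  but not in T, then x_S @ [c,d,c] is not uniquely determined by its bigram vector
  (the two blocks between the last three occurrences of c can be swapped), while
  x_T @ [c,d,c] is (all letters but the last are distinct, so the word can be read off
  its bigrams letter by letter).  Hence the words x_S are pairwise distinguishable by
  L_UNIQ and any DFA for L_UNIQ has at least 2^|U| = 2^(|Sigma|-1) states.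
\<close>

subsection \<open>Bigram vectors as multisets of adjacent pairs\<close>

fun pairs :: "'b list \<Rightarrow> ('b \<times> 'b) multiset" where
  "pairs (x # y # r) = add_mset (x, y) (pairs (y # r))"
| "pairs _ = {#}"

lemma bigram_Cons_Cons:
  "bigram (x # y # r) i j = (if x = i \<and> y = j then 1 else 0) + bigram (y # r) i j"
proof -
  define K where "K = {k. Suc k < length (y # r) \<and> (y # r) ! k = i \<and> (y # r) ! Suc k = j}"
  have split: "{k. Suc k < length (x # y # r) \<and> (x # y # r) ! k = i \<and> (x # y # r) ! Suc k = j}
        = (if x = i \<and> y = j then {0} else {}) \<union> Suc ` K"
  proof (rule set_eqI)
    fix k show "k \<in> {k. Suc k < length (x # y # r) \<and> (x # y # r) ! k = i \<and> (x # y # r) ! Suc k = j}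
                \<longleftrightarrow> k \<in> (if x = i \<and> y = j then {0} else {}) \<union> Suc ` K"
      by (cases k) (auto simp: K_def)
  qed
  have "finite K" by (rule finite_subset[of _ "{..<length (y # r)}"]) (auto simp: K_def)
  then have "card ((if x = i \<and> y = j then {0} else {}) \<union> Suc ` K)
             = (if x = i \<and> y = j then 1 else 0) + card K"
    by (subst card_Un_disjoint) (auto simp: card_image)
  then show ?thesis unfolding bigram_def K_def[symmetric] split .
qed

lemma bigram_pairs: "bigram z i j = count (pairs z) (i, j)"
  by (induction z rule: pairs.induct) (auto simp: bigram_Cons_Cons, auto simp: bigram_def)

lemma bigram_eq_iff_pairs_eq: "bigram z = bigram z' \<longleftrightarrow> pairs z = pairs z'"
  by (auto intro!: multiset_eqI simp: bigram_pairs fun_eq_iff)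

lemma size_pairs: "size (pairs z) = length z - 1"
  by (induction z rule: pairs.induct) auto

lemma pairs_append_Cons: "pairs (xs @ c # ys) = pairs (xs @ [c]) + pairs (c # ys)"
  by (induction xs rule: pairs.induct) auto

lemma pairs_swap_blocks:
  "pairs (xs @ c # ys @ c # zs @ c # ws) = pairs (xs @ c # zs @ c # ys @ c # ws)"
proof -
  have split: "pairs (c # ys @ c # zs) = pairs (c # ys @ [c]) + pairs (c # zs)" for ys zs
    using pairs_append_Cons[of "c # ys" c zs] by simp
  have "pairs (xs @ c # ys @ c # zs @ c # ws)
        = pairs (xs @ [c]) + (pairs (c # ys @ [c]) + (pairs (c # zs @ [c]) + pairs (c # ws)))"
    by (simp only: pairs_append_Cons[of xs c "ys @ c # zs @ c # ws"] split[of ys "zs @ c # ws"] split[of zs ws])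
  moreover have "pairs (xs @ c # zs @ c # ys @ c # ws)
        = pairs (xs @ [c]) + (pairs (c # zs @ [c]) + (pairs (c # ys @ [c]) + pairs (c # ws)))"
    by (simp only: pairs_append_Cons[of xs c "zs @ c # ys @ c # ws"] split[of zs "ys @ c # ws"] split[of ys ws])
  ultimately show ?thesis by (simp only: add.left_commute)
qed

lemma bigram_eq_length:
  assumes "bigram z = bigram z'" "z \<noteq> []" "z' \<noteq> []"
  shows "length z = length z'"
proof -
  have "length z - 1 = length z' - 1"
    using assms(1) size_pairs[of z] size_pairs[of z'] by (simp add: bigram_eq_iff_pairs_eq)
  then show ?thesis using assms(2,3) by (simp add: Suc_diff_1 flip: length_greater_0_conv)
qed

lemma bigram_pos_iff: "0 < bigram z a b \<longleftrightarrow> (\<exists>k. Suc k < length z \<and> z ! k = a \<and> z ! Suc k = b)"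
  unfolding bigram_def by (subst card_gt_0_iff) (auto intro: finite_subset[of _ "{..<length z}"])

subsection \<open>Reconstructing a list from its bigrams\<close>

text \<open>In z, the letter following any non-final position is determined by the letter at
  that position, except that an occurrence may additionally be followed by the end
  marker e.\<close>
definition next_determined :: "'b list \<Rightarrow> 'b \<Rightarrow> bool" where
  "next_determined z e \<longleftrightarrow>
     (\<forall>i k. Suc (Suc i) < length z \<longrightarrow> Suc k < length z \<longrightarrow> z ! k = z ! i \<longrightarrow>
            z ! Suc k \<noteq> e \<longrightarrow> z ! Suc k = z ! Suc i)"

lemma bigram_reconstruct:
  assumes eq: "bigram z = bigram z'" and len: "length z = length z'"
    and hd: "hd z = hd z'" and last: "last z = last z'"
    and interior: "\<forall>i. 0 < i \<longrightarrow> Suc i < length z \<longrightarrow> z ! i \<noteq> e"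
    and det: "next_determined z' e"
  shows "z = z'"
proof (rule nth_equalityI[OF len])
  have step: "z ! Suc i = z' ! Suc i" if i: "Suc i < length z" and IH: "z ! i = z' ! i" for i
  proof (cases "Suc (Suc i) < length z")
    case False
    then have "Suc i = length z - 1" "Suc i = length z' - 1" using i len by linarith+
    then show ?thesis using last i len by (metis last_conv_nth list.size(3) not_less_zero)
  next
    case True
    have "0 < bigram z' (z' ! i) (z ! Suc i)"
      using bigram_pos_iff[of z] i IH eq by metis
    then obtain k where k: "Suc k < length z'" "z' ! k = z' ! i" "z' ! Suc k = z ! Suc i"
      by (auto simp: bigram_pos_iff)
    moreover have "z ! Suc i \<noteq> e" using interior True by blast
    ultimately show ?thesis using det True len unfolding next_determined_def by metis
  qed
  show "z ! i = z' ! i" if "i < length z" for i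
    using that
  proof (induction i)
    case 0
    then show ?case using hd len by (metis hd_conv_nth list.size(3) not_less_zero)
  next
    case (Suc i)
    then show ?case using step by simp
  qed
qed

subsection \<open>Words that are and are not uniquely determined by their bigrams\<close>

lemma length_delim: "length (delim w) = length w + 2"
  by (simp add: delim_def)

lemma nth_delim:
  "i < length (delim w) \<Longrightarrow>
     delim w ! i = (if i = 0 \<or> i = Suc (length w) then None else Some (w ! (i - 1)))"
  by (auto simp: delim_def nth_append nth_Cons split: nat.splits)

lemma next_determined_delim:
  assumes "distinct (butlast w)"
  shows "next_determined (delim w) None"
  unfolding next_determined_def
proof (intro allI impI)
  fix i k
  assume i: "Suc (Suc i) < length (delim w)" and k: "Suc k < length (delim w)"
    and same: "delim w ! k = delim w ! i" and notN: "delim w ! Suc k \<noteq> None"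
  have ik: "i < length w" "k < length w"
    using i k notN nth_delim[of "Suc k" w] by (auto simp: length_delim split: if_splits)
  have "k = i"
  proof (cases "i = 0 \<or> k = 0")
    case True
    then show ?thesis using same ik nth_delim[of k w] nth_delim[of i w]
      by (auto simp: length_delim split: if_splits)
  next
    case False
    then have "butlast w ! (k - 1) = butlast w ! (i - 1)"
      using same ik nth_delim[of k w] nth_delim[of i w] by (auto simp: length_delim nth_butlast)
    moreover have "k - 1 < length (butlast w)" "i - 1 < length (butlast w)"
      using False ik by auto
    ultimately have "k - 1 = i - 1" using nth_eq_iff_index_eq[OF assms] by blast
    then show ?thesis using False by linarith
  qed
  then show "delim w ! Suc k = delim w ! Suc i" by simp
qed

lemma distinct_butlast_in_L_UNIQ:
  assumes "distinct (butlast w)"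
  shows "w \<in> L_UNIQ"
  unfolding L_UNIQ_def
proof (intro CollectI allI impI)
  fix v assume eq: "bigram (delim v) = bigram (delim w)"
  have "delim v = delim w"
  proof (rule bigram_reconstruct[OF eq _ _ _ _ next_determined_delim[OF assms]])
    show "length (delim v) = length (delim w)"
      by (rule bigram_eq_length[OF eq]) (auto simp: delim_def)
    show "\<forall>i. 0 < i \<longrightarrow> Suc i < length (delim v) \<longrightarrow> delim v ! i \<noteq> None"
      using nth_delim[of _ v] by (auto simp: length_delim)
  qed (auto simp: delim_def)
  then show "v = w" by (simp add: delim_def)
qed

lemma takeWhile_before:
  "c \<notin> set ys \<Longrightarrow> takeWhile (\<lambda>x. x \<noteq> c) (ys @ c # zs) = ys"
  by (induction ys) auto

text \<open>Swapping two distinct c-free blocks between three occurrences of c yields a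
  different word with the same bigrams, so such a word is not in L_UNIQ.\<close>
lemma swappable_notin_L_UNIQ:
  assumes "c \<notin> set ys" "c \<notin> set zs" "ys \<noteq> zs"
  shows "xs @ c # ys @ c # zs @ c # ws \<notin> L_UNIQ"
proof -
  let ?w = "xs @ c # ys @ c # zs @ c # ws" and ?v = "xs @ c # zs @ c # ys @ c # ws"
  have "ys @ c # zs \<noteq> zs @ c # ys"
    using assms takeWhile_before[of c ys zs] takeWhile_before[of c zs ys] by metis
  then have differ: "?v \<noteq> ?w" by auto
  have "delim ?w = (None # map Some xs) @ Some c # map Some ys @ Some c # map Some zs
                     @ Some c # (map Some ws @ [None])"
    and "delim ?v = (None # map Some xs) @ Some c # map Some zs @ Some c # map Some ys
                     @ Some c # (map Some ws @ [None])"
    by (simp_all add: delim_def)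
  then have "bigram (delim ?v) = bigram (delim ?w)"
    by (simp only: bigram_eq_iff_pairs_eq pairs_swap_blocks)
  with differ show ?thesis unfolding L_UNIQ_def by blast
qed

lemma repeated_letter_notin_L_UNIQ:
  assumes "c \<in> set xs" "d \<notin> set xs" "c \<noteq> d"
  shows "xs @ [c, d, c] \<notin> L_UNIQ"
proof -
  obtain p q where xs: "xs = p @ c # q" and "c \<notin> set q"
    using split_list_last[OF assms(1)] by blast
  moreover have "q \<noteq> [d]" using xs assms(2) by auto
  ultimately show ?thesis
    using swappable_notin_L_UNIQ[of c q "[d]" p "[]"] assms(3) by simp
qed

lemma fresh_letter_in_L_UNIQ:
  assumes "distinct xs" "c \<notin> set xs" "d \<notin> set xs" "c \<noteq> d"
  shows "xs @ [c, d, c] \<in> L_UNIQ"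
  using assms by (intro distinct_butlast_in_L_UNIQ) (simp add: butlast_append)

subsection \<open>Lower bound for DFAs from distinguishable words\<close>

lemma dfa_run_in_states:
  assumes "dfa Q \<delta> q0 F" "q \<in> Q"
  shows "fold (\<lambda>a q. \<delta> q a) w q \<in> Q"
  using assms(2) by (induction w arbitrary: q) (use assms(1) in \<open>auto simp: dfa_def\<close>)

lemma dfa_card_ge_distinguishable:
  assumes dfa: "dfa Q \<delta> q0 F"
    and dist: "\<And>i j. i \<in> I \<Longrightarrow> j \<in> I \<Longrightarrow> i \<noteq> j \<Longrightarrow>
                 \<exists>z. (x i @ z \<in> dfa_lang \<delta> q0 F) \<noteq> (x j @ z \<in> dfa_lang \<delta> q0 F)"
  shows "card I \<le> card Q"
proof -
  define run where "run w = fold (\<lambda>a q. \<delta> q a) w q0" for w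
  have "inj_on (run \<circ> x) I"
  proof (rule inj_onI, rule ccontr)
    fix i j assume "i \<in> I" "j \<in> I" "(run \<circ> x) i = (run \<circ> x) j" "i \<noteq> j"
    then show False using dist[of i j] by (auto simp: dfa_lang_def run_def)
  qed
  moreover have "(run \<circ> x) ` I \<subseteq> Q"
    using dfa_run_in_states[OF dfa] dfa by (auto simp: run_def dfa_def)
  ultimately show ?thesis using card_inj_on_le dfa by (metis dfa_def)
qed

theorem theorem3:
  fixes Q :: "'s set" and \<delta> :: "'s \<Rightarrow> 'a::finite \<Rightarrow> 's" and q0 :: 's and F :: "'s set"
  assumes "dfa Q \<delta> q0 F"
    and "dfa_lang \<delta> q0 F = (L_UNIQ :: 'a list set)"
  shows "card Q \<ge> 2 ^ (card (UNIV :: 'a set) - 1)"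
proof -
  obtain d :: 'a where True by blast
  define U where "U = UNIV - {d}"
  define enum where "enum S = (SOME xs. distinct xs \<and> set xs = S)" for S :: "'a set"
  have enum: "distinct (enum S) \<and> set (enum S) = S" for S
    unfolding enum_def by (rule someI_ex) (use finite_distinct_list[of S] in auto)
  have "card (Pow U) \<le> card Q"
  proof (rule dfa_card_ge_distinguishable[OF assms(1), of _ enum])
    fix S T assume "S \<in> Pow U" "T \<in> Pow U" "S \<noteq> T"
    then obtain c where "c \<in> S \<and> c \<notin> T \<or> c \<in> T \<and> c \<notin> S" "c \<noteq> d" "d \<notin> S" "d \<notin> T"
      by (auto simp: U_def)
    then show "\<exists>z. (enum S @ z \<in> dfa_lang \<delta> q0 F) \<noteq> (enum T @ z \<in> dfa_lang \<delta> q0 F)"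
      using repeated_letter_notin_L_UNIQ fresh_letter_in_L_UNIQ enum assms(2) by metis
  qed
  moreover have "card (Pow U) = 2 ^ (card (UNIV :: 'a set) - 1)"
    by (simp add: card_Pow U_def card_Diff_singleton)
  ultimately show ?thesis by simp
qed

end
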